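(* Let $(S,|\cdot|)$ be a finite metric space, let $f\ge1$ be an integer, and let $\varepsilon>0$ be a real number. Assume there exists a well-separated pair decomposition for $S$ with separation ratio $c=2+4/\varepsilon$, and let $m$ be its size. Then the graph $G=(S,E)$ constructed from this decomposition as described in the context is an $f$-faulty-degree $(1+\varepsilon)$-spanner for $S$ that has at most $(2f+1)^2m$ edges.
   Context: $K_S$ is the complete graph on $S$; all graphs on $S$ have edge weights $|pq|$; $\delta_X$ is shortest-path distance in $X$; $X\setminus F$ is $X$ with the edges of $F$ removed. A graph $G=(S,E)$ is an $f$-faulty-degree $t$-spanner for $S$ if for every $F\subseteq E$ with $(S,F)$ of maximum degree at most $f$ and all $p,q\in S$, $\delta_{G\setminus F}(p,q)\le t\,\delta_{K_S\setminus F}(p,q)$. For non-empty $A,B\subseteq S$: $|AB|=\min\{|pq|:p\in A,q\in B\}$, $\mathrm{diam}(A)=\max\{|pq|:p,q\in A\}$; $A,B$ are well-separated with respect to $c>0$ if $|AB|\ge c\max(\mathrm{diam}(A),\mathrm{diam}(B))$. A well-separated pair decomposition (WSPD) of $S$ with separation ratio $c$ is a sequence $\{A_1,B_1\},\dots,\{A_m,B_m\}$ of pairs of non-empty subsets of $S$ such that each $A_i,B_i$ are well-separated w.r.t. $c$, and for any two distinct $p,q\in S$ there is exactly one $i$ with ($p\in A_i$ and $q\in B_i$) or ($p\in B_i$ and $q\in A_i$); $m$ is its size. Construction of $G$: for each $i$, let $A_i'=A_i$ if $|A_i|\le 2f+1$ and otherwise let $A_i'$ be an arbitrary subset of $A_i$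 of size $2f+1$; define $B_i'$ from $B_i$ analogously. $E$ consists of all edges $\{x,y\}$ with $x\in A_i'$, $y\in B_i'$, over all $i=1,\dots,m$. *)

theory Defs
  imports "HOL-Analysis.Analysis"
begin

text \<open>Points live in a metric space type; |pq| is dist p q.
  Graphs on S are given by edge sets (sets of 2-element subsets of S).\<close>

definition complete_edges :: "'a set \<Rightarrow> 'a set set" where
  "complete_edges S = {{p, q} | p q. p \<in> S \<and> q \<in> S \<and> p \<noteq> q}"

definition walk :: "'a set set \<Rightarrow> 'a list \<Rightarrow> bool" where
  "walk E xs \<longleftrightarrow> xs \<noteq> [] \<and> (\<forall>i. Suc i < length xs \<longrightarrow> {xs ! i, xs ! Suc i} \<in> E)"

definition walk_length :: "'a::metric_space list \<Rightarrow> real" where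
  "walk_length xs = (\<Sum>i<length xs - 1. dist (xs ! i) (xs ! Suc i))"

text \<open>Shortest-path distance; \<infinity> if no path exists.\<close>
definition graph_dist :: "'a::metric_space set set \<Rightarrow> 'a \<Rightarrow> 'a \<Rightarrow> ereal" where
  "graph_dist E p q =
     (INF xs \<in> {xs. walk E xs \<and> hd xs = p \<and> last xs = q}. ereal (walk_length xs))"

definition max_degree_le :: "'a set \<Rightarrow> 'a set set \<Rightarrow> nat \<Rightarrow> bool" where
  "max_degree_le S F f \<longleftrightarrow> (\<forall>v\<in>S. card {e \<in> F. v \<in> e} \<le> f)"

definition fault_degree_spanner :: "'a::metric_space set \<Rightarrow> 'a set set \<Rightarrow> nat \<Rightarrow> real \<Rightarrow> bool" where
  "fault_degree_spanner S E f t \<longleftrightarrow>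
     (\<forall>F. F \<subseteq> E \<and> max_degree_le S F f \<longrightarrow>
        (\<forall>p\<in>S. \<forall>q\<in>S. graph_dist (E - F) p q \<le> ereal t * graph_dist (complete_edges S - F) p q))"

definition set_dist :: "'a::metric_space set \<Rightarrow> 'a set \<Rightarrow> real" where
  "set_dist A B = Min {dist p q | p q. p \<in> A \<and> q \<in> B}"

definition set_diam :: "'a::metric_space set \<Rightarrow> real" where
  "set_diam A = Max {dist p q | p q. p \<in> A \<and> q \<in> A}"

definition well_separated :: "real \<Rightarrow> 'a::metric_space set \<Rightarrow> 'a set \<Rightarrow> bool" where
  "well_separated c A B \<longleftrightarrow> set_dist A B \<ge> c * max (set_diam A) (set_diam B)"

definition is_wspd :: "'a::metric_space set \<Rightarrow> real \<Rightarrow> nat \<Rightarrow> (nat \<Rightarrow> 'a set) \<Rightarrow> (nat \<Rightarrow> 'a set) \<Rightarrow> bool" where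
  "is_wspd S c m A B \<longleftrightarrow>
     (\<forall>i<m. A i \<noteq> {} \<and> B i \<noteq> {} \<and> A i \<subseteq> S \<and> B i \<subseteq> S \<and> well_separated c (A i) (B i)) \<and>
     (\<forall>p\<in>S. \<forall>q\<in>S. p \<noteq> q \<longrightarrow>
        (\<exists>!i. i < m \<and> ((p \<in> A i \<and> q \<in> B i) \<or> (p \<in> B i \<and> q \<in> A i))))"

definition rep_choice :: "nat \<Rightarrow> 'a set \<Rightarrow> 'a set \<Rightarrow> bool" where
  "rep_choice f X X' \<longleftrightarrow>
     (if card X \<le> 2*f+1 then X' = X else X' \<subseteq> X \<and> card X' = 2*f+1)"

definition wspd_graph_edges :: "nat \<Rightarrow> (nat \<Rightarrow> 'a set) \<Rightarrow> (nat \<Rightarrow> 'a set) \<Rightarrow> 'a set set" where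
  "wspd_graph_edges m A' B' = (\<Union>i<m. {{x, y} | x y. x \<in> A' i \<and> y \<in> B' i})"

end

theory Submission
  imports Defs
begin

text \<open>Take the pairs p, q of S in order of increasing distance, where p q is not a faulty edge,
  and let {A, B} be the pair of the decomposition separating them, p \<in> A and q \<in> B.
  If p is not among the 2f+1 representatives of A, at least f+1 of them are joined to p by
  a non-faulty edge of the complete graph; likewise for q.  Since every vertex meets at most
  f faulty edges, one finds representatives x of A and y of B such that x y is a surviving
  edge of G and p x, y q are non-faulty.  As A and B are small compared with |pq|, the pairs
  p x and y q are closer than p q, so by induction G - F contains paths of length at most
  (1+\<epsilon>)|px| and (1+\<epsilon>)|yq|, and the separation ratio 2 + 4/\<epsilon> makes the detour through the
  edge x y at most (1+\<epsilon>)|pq|.  Stretching every edge of a path of the complete graph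
  minus F in this way gives the spanner property.\<close>

lemma walk_Cons_Cons: "walk E (x # y # zs) \<longleftrightarrow> {x, y} \<in> E \<and> walk E (y # zs)"
proof
  assume h: "walk E (x # y # zs)"
  have "{x, y} \<in> E"
    using h[unfolded walk_def] by (metis Suc_less_eq length_Cons nth_Cons_0 nth_Cons_Suc zero_less_Suc)
  moreover have "walk E (y # zs)"
    unfolding walk_def
  proof (intro conjI allI impI)
    fix i assume "Suc i < length (y # zs)"
    then show "{(y # zs) ! i, (y # zs) ! Suc i} \<in> E"
      using h[unfolded walk_def, THEN conjunct2, rule_format, of "Suc i"] by simp
  qed simp
  ultimately show "{x, y} \<in> E \<and> walk E (y # zs)" ..
next
  assume h: "{x, y} \<in> E \<and> walk E (y # zs)"
  show "walk E (x # y # zs)"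
    unfolding walk_def
  proof (intro conjI allI impI)
    fix i assume i: "Suc i < length (x # y # zs)"
    show "{(x # y # zs) ! i, (x # y # zs) ! Suc i} \<in> E"
    proof (cases i)
      case 0
      then show ?thesis using h by simp
    next
      case (Suc j)
      then show ?thesis
        using i h[THEN conjunct2, unfolded walk_def, THEN conjunct2, rule_format, of j] by simp
    qed
  qed simp
qed

lemma walk_singleton: "walk E [x]"
  by (simp add: walk_def)

lemma walk_length_Cons_Cons: "walk_length (x # y # zs) = dist x y + walk_length (y # zs)"
  unfolding walk_length_def by (simp del: sum.lessThan_Suc add: sum.lessThan_Suc_shift)

lemma walk_length_singleton: "walk_length [x] = 0"
  unfolding walk_length_def by simp

lemma walk_append:
  assumes "walk E xs" "walk E ys" "last xs = hd ys"
  shows "walk E (xs @ tl ys)"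
  using assms
proof (induction xs rule: induct_list012)
  case 1
  then show ?case by (simp add: walk_def)
next
  case (2 x)
  then have "ys = x # tl ys" by (metis hd_Cons_tl last_ConsL walk_def)
  then show ?case using "2.prems" by (metis append_Cons append_Nil)
next
  case (3 x y zs)
  then show ?case by (simp add: walk_Cons_Cons)
qed

lemma walk_length_append:
  assumes "xs \<noteq> []" "ys \<noteq> []" "last xs = hd ys"
  shows "walk_length (xs @ tl ys) = walk_length xs + walk_length ys"
  using assms
proof (induction xs rule: induct_list012)
  case (2 x)
  then have "ys = x # tl ys" by (metis hd_Cons_tl last_ConsL)
  then show ?case by (metis append_Cons append_Nil add_0 walk_length_singleton)
next
  case (3 x y zs)
  then show ?case by (simp add: walk_length_Cons_Cons)
qed simp

lemma graph_dist_le_walk_length: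
  "walk E xs \<Longrightarrow> hd xs = p \<Longrightarrow> last xs = q \<Longrightarrow> graph_dist E p q \<le> ereal (walk_length xs)"
  unfolding graph_dist_def by (rule INF_lower) auto

lemma graph_dist_refl_le: "graph_dist E p p \<le> 0"
  using graph_dist_le_walk_length[of E "[p]" p p]
  by (simp add: walk_singleton walk_length_singleton zero_ereal_def)

lemma graph_dist_edge_le: "{p, q} \<in> E \<Longrightarrow> graph_dist E p q \<le> ereal (dist p q)"
  using graph_dist_le_walk_length[of E "[p, q]" p q]
  by (simp add: walk_Cons_Cons walk_singleton walk_length_Cons_Cons walk_length_singleton)

lemma graph_dist_less_imp_walk:
  assumes "graph_dist E p q < ereal a"
  obtains xs where "walk E xs" "hd xs = p" "last xs = q" "walk_length xs < a"
  using assms unfolding graph_dist_def by (auto simp: INF_less_iff)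

lemma graph_dist_triangle_le:
  assumes "graph_dist E p q \<le> ereal a" "graph_dist E q r \<le> ereal b"
  shows "graph_dist E p r \<le> ereal (a + b)"
proof (rule ereal_le_epsilon2)
  fix e :: real assume "0 < e"
  then have "graph_dist E p q < ereal (a + e/2)" "graph_dist E q r < ereal (b + e/2)"
    using assms by (auto intro: order.strict_trans1)
  then obtain xs ys where
    xs: "walk E xs" "hd xs = p" "last xs = q" "walk_length xs < a + e/2" and
    ys: "walk E ys" "hd ys = q" "last ys = r" "walk_length ys < b + e/2"
    by (metis graph_dist_less_imp_walk)
  have ne: "xs \<noteq> []" "ys \<noteq> []" using xs(1) ys(1) by (auto simp: walk_def)
  have joint: "last xs = hd ys" using xs(3) ys(2) by simp
  have "last (xs @ tl ys) = r"
    using xs(3) ys(2,3) ne by (cases ys) auto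
  then have "graph_dist E p r \<le> ereal (walk_length (xs @ tl ys))"
    using graph_dist_le_walk_length[OF walk_append[OF xs(1) ys(1) joint]] xs(2) ne by simp
  also have "\<dots> = ereal (walk_length xs + walk_length ys)"
    using walk_length_append[OF ne] xs(3) ys(2) by simp
  also have "\<dots> \<le> ereal (a + b) + ereal e" using xs(4) ys(4) by simp
  finally show "graph_dist E p r \<le> ereal (a + b) + ereal e" .
qed

lemma ereal_mult_graph_dist:
  assumes "t > 0"
  shows "ereal t * graph_dist E p q =
    (INF xs \<in> {xs. walk E xs \<and> hd xs = p \<and> last xs = q}. ereal (t * walk_length xs))"
proof -
  have "mono ((*) (ereal t))" "bij ((*) (ereal t))"
    using assms by (auto simp: mono_def ereal_mult_left_mono intro!: bij_betw_byWitness[of _ "\<lambda>x. x / ereal t"])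
                   (auto simp: ereal_mult_divide ereal_divide_eq)
  then show ?thesis
    unfolding graph_dist_def by (simp add: mono_bij_Inf image_image)
qed

lemma graph_dist_le_mult_if_edges:
  assumes "t > 0" and edges: "\<And>x y. {x, y} \<in> E' \<Longrightarrow> graph_dist E x y \<le> ereal (t * dist x y)"
  shows "graph_dist E p q \<le> ereal t * graph_dist E' p q"
  unfolding ereal_mult_graph_dist[OF \<open>t > 0\<close>]
proof (rule INF_greatest, clarify)
  fix xs assume "walk E' xs"
  then show "graph_dist E (hd xs) (last xs) \<le> ereal (t * walk_length xs)"
  proof (induction xs rule: induct_list012)
    case 1
    then show ?case by (simp add: walk_def)
  next
    case (2 x)
    then show ?case using graph_dist_refl_le[of E x] by (simp add: walk_length_singleton zero_ereal_def)
  next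
    case (3 x y zs)
    then have "graph_dist E x y \<le> ereal (t * dist x y)"
      "graph_dist E y (last (y # zs)) \<le> ereal (t * walk_length (y # zs))"
      by (simp_all add: walk_Cons_Cons edges)
    then have "graph_dist E x (last (y # zs)) \<le> ereal (t * dist x y + t * walk_length (y # zs))"
      by (rule graph_dist_triangle_le)
    then show ?case by (simp add: walk_length_Cons_Cons distrib_left)
  qed
qed

lemma finite_dist_induct [consumes 3, case_names closer]:
  fixes S :: "'a::metric_space set"
  assumes "finite S" "p \<in> S" "q \<in> S"
    and step: "\<And>p q. p \<in> S \<Longrightarrow> q \<in> S \<Longrightarrow>
      (\<And>x y. x \<in> S \<Longrightarrow> y \<in> S \<Longrightarrow> dist x y < dist p q \<Longrightarrow> P x y) \<Longrightarrow> P p q"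
  shows "P p q"
  using assms(2,3)
proof (induction "card {z \<in> S \<times> S. dist (fst z) (snd z) < dist p q}" arbitrary: p q
    rule: less_induct)
  case less
  let ?closer = "\<lambda>a b. {z \<in> S \<times> S. dist (fst z) (snd z) < dist a b}"
  show ?case
  proof (rule step[OF less.prems])
    fix x y assume xy: "x \<in> S" "y \<in> S" "dist x y < dist p q"
    have "?closer x y \<subset> ?closer p q"
    proof
      show "?closer x y \<subseteq> ?closer p q" using xy(3) by auto
      show "?closer x y \<noteq> ?closer p q"
        using xy by (metis (no_types, lifting) fst_conv snd_conv mem_Collect_eq mem_Sigma_iff order.irrefl)
    qed
    then show "P x y"
      using less.hyps xy(1,2) assms(1) by (simp add: psubset_card_mono)
  qed
qed

lemma dist_le_set_diam:
  assumes "finite X" "a \<in> X" "b \<in> X"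
  shows "dist a b \<le> set_diam X"
  unfolding set_diam_def using assms by (intro Max_ge finite_image_set2) auto

lemma set_dist_le_dist:
  assumes "finite A" "finite B" "a \<in> A" "b \<in> B"
  shows "set_dist A B \<le> dist a b"
  unfolding set_dist_def using assms by (intro Min_le finite_image_set2) auto

lemma set_dist_commute: "set_dist A B = set_dist B A"
proof -
  have "{dist p q | p q. p \<in> A \<and> q \<in> B} = {dist p q | p q. p \<in> B \<and> q \<in> A}"
    by (auto; metis dist_commute)
  then show ?thesis unfolding set_dist_def by simp
qed

lemma well_separated_commute: "well_separated c A B \<longleftrightarrow> well_separated c B A"
  unfolding well_separated_def by (simp add: set_dist_commute max.commute)

lemma rep_choice_subset: "rep_choice f X X' \<Longrightarrow> X' \<subseteq> X"
  unfolding rep_choice_def by (auto split: if_splits)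

lemma card_rep_choice_le: "finite X \<Longrightarrow> rep_choice f X X' \<Longrightarrow> card X' \<le> 2*f+1"
  unfolding rep_choice_def by (auto split: if_splits)

lemma card_faulty_neighbours_le:
  assumes "max_degree_le S F f" "finite F" "v \<in> S"
  shows "card {z \<in> Z. {v, z} \<in> F} \<le> f"
proof -
  have "card {z \<in> Z. {v, z} \<in> F} \<le> card {e \<in> F. v \<in> e}"
    by (rule card_inj_on_le[where f = "\<lambda>z. {v, z}"]) (auto simp: inj_on_def doubleton_eq_iff assms(2))
  also have "\<dots> \<le> f" using assms(1,3) unfolding max_degree_le_def by blast
  finally show ?thesis .
qed

lemma exists_nonfaulty_neighbour:
  assumes "max_degree_le S F f" "finite F" "v \<in> S" "finite Z" "f < card Z"
  obtains z where "z \<in> Z" "{v, z} \<notin> F"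
proof -
  have "{z \<in> Z. {v, z} \<in> F} \<noteq> Z"
    using card_faulty_neighbours_le[OF assms(1-3), of Z] assms(5) by auto
  then show ?thesis using that by blast
qed

lemma reachable_representatives:
  assumes "max_degree_le S F f" "finite F" "p \<in> S" "finite X" "p \<in> X" "rep_choice f X X'"
  obtains C where "C \<subseteq> X'" "C = {p} \<or> f < card C" "\<forall>x \<in> C. x = p \<or> {p, x} \<notin> F"
proof (cases "p \<in> X'")
  case True
  then show ?thesis using that[of "{p}"] by auto
next
  case False
  then have X': "X' \<subseteq> X" "card X' = 2*f+1"
    using assms(5,6) unfolding rep_choice_def by (auto split: if_splits)
  let ?C = "{x \<in> X'. {p, x} \<notin> F}"
  have "card X' = card (?C \<union> {x \<in> X'. {p, x} \<in> F})"
    by (rule arg_cong[where f = card]) blast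
  also have "\<dots> \<le> card ?C + card {x \<in> X'. {p, x} \<in> F}"
    by (rule card_Un_le)
  finally have "f < card ?C"
    using card_faulty_neighbours_le[OF assms(1-3), of X'] X'(2) by linarith
  then show ?thesis using that[of ?C] by auto
qed

lemma exists_nonfaulty_bridge:
  assumes deg: "max_degree_le S F f" "finite F" and S: "X \<subseteq> S" "Y \<subseteq> S" "finite X" "finite Y"
    and pq: "p \<in> X" "q \<in> Y" "{p, q} \<notin> F"
    and reps: "rep_choice f X X'" "rep_choice f Y Y'"
  obtains x y where "x \<in> X'" "y \<in> Y'" "{x, y} \<notin> F"
    "x = p \<or> {p, x} \<notin> F" "y = q \<or> {q, y} \<notin> F"
proof -
  obtain CX where CX: "CX \<subseteq> X'" "CX = {p} \<or> f < card CX" "\<forall>x \<in> CX. x = p \<or> {p, x} \<notin> F"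
    using reachable_representatives[OF deg _ S(3) pq(1) reps(1)] pq(1) S(1) by blast
  obtain CY where CY: "CY \<subseteq> Y'" "CY = {q} \<or> f < card CY" "\<forall>y \<in> CY. y = q \<or> {q, y} \<notin> F"
    using reachable_representatives[OF deg _ S(4) pq(2) reps(2)] pq(2) S(2) by blast
  have "CY \<subseteq> Y" using CY(1) rep_choice_subset[OF reps(2)] by blast
  then have "finite CY" using S(4) by (rule finite_subset)
  have "CX \<subseteq> S" using CX(1) rep_choice_subset[OF reps(1)] S(1) by blast
  have "\<exists>x \<in> CX. \<exists>y \<in> CY. {x, y} \<notin> F"
  proof (cases "CY = {q}")
    case True
    show ?thesis
    proof (cases "CX = {p}")
      case False
      then have "f < card CX" "finite CX" using CX(2) card.infinite by fastforce+
      then obtain x where "x \<in> CX" "{q, x} \<notin> F"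
        using exists_nonfaulty_neighbour[OF deg] pq(2) S(2) by blast
      then show ?thesis using True by (auto simp: insert_commute)
    qed (use True pq in auto)
  next
    case False
    then have "f < card CY" using CY(2) by blast
    moreover obtain x where "x \<in> CX" using CX(2) by fastforce
    ultimately obtain y where "y \<in> CY" "{x, y} \<notin> F"
      using exists_nonfaulty_neighbour[OF deg _ \<open>finite CY\<close>] \<open>CX \<subseteq> S\<close> by blast
    then show ?thesis using \<open>x \<in> CX\<close> by blast
  qed
  then obtain x y where "x \<in> CX" "y \<in> CY" "{x, y} \<notin> F" by blast
  then show ?thesis using that[of x y] CX(1,3) CY(1,3) by blast
qed

text \<open>The detour bound: (2+4/\<epsilon>)(a+b) \<le> 2|pq| multiplied by \<epsilon>/2 absorbs the extra
  (2+\<epsilon>)(a+b) coming from the triangle inequality for |xy|.\<close>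

lemma detour_le:
  fixes p q x y :: "'a::metric_space"
  assumes "\<epsilon> > 0" "(2 + 4/\<epsilon>) * a \<le> dist p q" "(2 + 4/\<epsilon>) * b \<le> dist p q"
    and "dist p x \<le> a" "dist y q \<le> b"
  shows "(1 + \<epsilon>) * dist p x + dist x y + (1 + \<epsilon>) * dist y q \<le> (1 + \<epsilon>) * dist p q"
proof -
  have "dist x y \<le> dist p x + dist p q + dist y q"
    using dist_triangle[of x y p] dist_triangle[of p y q] dist_commute[of x p] dist_commute[of q y]
    by linarith
  then have "(1 + \<epsilon>) * dist p x + dist x y + (1 + \<epsilon>) * dist y q
      \<le> (2 + \<epsilon>) * dist p x + (2 + \<epsilon>) * dist y q + dist p q"
    by (simp add: algebra_simps)
  also have "\<dots> \<le> (2 + \<epsilon>) * (a + b) + dist p q"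
    using assms by (simp add: distrib_left add_mono)
  also have "(2 + \<epsilon>) * (a + b) = (\<epsilon> / 2) * ((2 + 4/\<epsilon>) * a + (2 + 4/\<epsilon>) * b)"
    using assms(1) by (simp add: field_simps)
  also have "\<dots> \<le> (\<epsilon> / 2) * (2 * dist p q)"
    using assms by (intro mult_left_mono) auto
  finally show ?thesis by (simp add: algebra_simps)
qed

lemma wspd_pair_graph_dist_le:
  fixes p q :: "'a::metric_space"
  assumes deg: "max_degree_le S F f" "finite F" and S: "X \<subseteq> S" "Y \<subseteq> S" "finite X" "finite Y"
    and pq: "p \<in> X" "q \<in> Y" "p \<noteq> q" "{p, q} \<notin> F"
    and "\<epsilon> > 0" and sep: "well_separated (2 + 4/\<epsilon>) X Y"
    and reps: "rep_choice f X X'" "rep_choice f Y Y'"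
    and edges: "\<forall>x \<in> X'. \<forall>y \<in> Y'. {x, y} \<in> G"
    and IH: "\<And>x y. x \<in> S \<Longrightarrow> y \<in> S \<Longrightarrow> dist x y < dist p q \<Longrightarrow> x = y \<or> {x, y} \<notin> F
               \<Longrightarrow> graph_dist (G - F) x y \<le> ereal ((1 + \<epsilon>) * dist x y)"
  shows "graph_dist (G - F) p q \<le> ereal ((1 + \<epsilon>) * dist p q)"
proof -
  define c where "c = 2 + 4/\<epsilon>"
  have "c * max (set_diam X) (set_diam Y) \<le> dist p q"
    using sep set_dist_le_dist[OF S(3,4) pq(1,2)] unfolding well_separated_def c_def by linarith
  moreover have "c > 2" using \<open>\<epsilon> > 0\<close> unfolding c_def by simp
  moreover have "c * set_diam X \<le> c * max (set_diam X) (set_diam Y)"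
    "c * set_diam Y \<le> c * max (set_diam X) (set_diam Y)"
    using \<open>c > 2\<close> by (simp_all add: mult_left_mono)
  ultimately have cX: "c * set_diam X \<le> dist p q" and cY: "c * set_diam Y \<le> dist p q"
    by linarith+
  obtain x y where xy: "x \<in> X'" "y \<in> Y'" "{x, y} \<notin> F" "x = p \<or> {p, x} \<notin> F" "y = q \<or> {q, y} \<notin> F"
    using exists_nonfaulty_bridge[OF deg S pq(1,2,4) reps] .
  have xX: "x \<in> X" and yY: "y \<in> Y"
    using xy(1,2) rep_choice_subset[OF reps(1)] rep_choice_subset[OF reps(2)] by blast+
  have px: "dist p x \<le> set_diam X" and yq: "dist y q \<le> set_diam Y"
    using dist_le_set_diam[OF S(3) pq(1) xX] dist_le_set_diam[OF S(4) yY pq(2)] .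
  have "0 < dist p q" using pq(3) by simp
  moreover have "2 * set_diam X \<le> c * set_diam X" "2 * set_diam Y \<le> c * set_diam Y"
    using px yq \<open>c > 2\<close> zero_le_dist[of p x] zero_le_dist[of y q]
    by (intro mult_right_mono; linarith)+
  ultimately have "dist p x < dist p q" "dist y q < dist p q"
    using px yq cX cY by linarith+
  then have px_path: "graph_dist (G - F) p x \<le> ereal ((1 + \<epsilon>) * dist p x)"
    and yq_path: "graph_dist (G - F) y q \<le> ereal ((1 + \<epsilon>) * dist y q)"
    using IH[of p x] IH[of y q] xX yY pq(1,2) S(1,2) xy(4,5) by (auto simp: insert_commute)
  have "{x, y} \<in> G - F" using edges xy(1-3) by blast
  then have "graph_dist (G - F) x y \<le> ereal (dist x y)" by (rule graph_dist_edge_le)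
  then have "graph_dist (G - F) p q
      \<le> ereal ((1 + \<epsilon>) * dist p x + dist x y + (1 + \<epsilon>) * dist y q)"
    using graph_dist_triangle_le[OF graph_dist_triangle_le[OF px_path] yq_path] by blast
  also have "\<dots> \<le> ereal ((1 + \<epsilon>) * dist p q)"
    using detour_le[OF \<open>\<epsilon> > 0\<close> cX[unfolded c_def] cY[unfolded c_def] px yq] by simp
  finally show ?thesis .
qed

lemma finite_wspd_graph_edges:
  "\<forall>i<m. finite (A' i) \<and> finite (B' i) \<Longrightarrow> finite (wspd_graph_edges m A' B')"
  unfolding wspd_graph_edges_def by (auto intro: finite_image_set2)

lemma card_wspd_graph_edges_le:
  assumes "\<forall>i<m. finite (A' i) \<and> card (A' i) \<le> k \<and> finite (B' i) \<and> card (B' i) \<le> k"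
  shows "card (wspd_graph_edges m A' B') \<le> k^2 * m"
proof -
  have "wspd_graph_edges m A' B' = (\<Union>i<m. (\<lambda>(x, y). {x, y}) ` (A' i \<times> B' i))"
    unfolding wspd_graph_edges_def by auto
  then have "card (wspd_graph_edges m A' B') \<le> (\<Sum>i<m. card ((\<lambda>(x, y). {x, y}) ` (A' i \<times> B' i)))"
    by (simp add: card_UN_le)
  also have "\<dots> \<le> (\<Sum>i<m. k^2)"
  proof (rule sum_mono)
    fix i assume "i \<in> {..<m}"
    then have "card (A' i) * card (B' i) \<le> k * k"
      using assms by (simp add: mult_le_mono)
    then show "card ((\<lambda>(x, y). {x, y}) ` (A' i \<times> B' i)) \<le> k^2"
      using card_image_le[of "A' i \<times> B' i" "\<lambda>(x, y). {x, y}"] \<open>i \<in> {..<m}\<close> assms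
      by (simp add: card_cartesian_product power2_eq_square)
  qed
  finally show ?thesis by (simp add: mult.commute)
qed

lemma wspd_pair_containing:
  assumes wspd: "is_wspd S c m A B"
    and reps: "\<forall>i<m. rep_choice f (A i) (A' i) \<and> rep_choice f (B i) (B' i)"
    and "p \<in> S" "q \<in> S" "p \<noteq> q"
  obtains X Y X' Y' where "p \<in> X" "q \<in> Y" "X \<subseteq> S" "Y \<subseteq> S" "well_separated c X Y"
    "rep_choice f X X'" "rep_choice f Y Y'" "\<forall>x \<in> X'. \<forall>y \<in> Y'. {x, y} \<in> wspd_graph_edges m A' B'"
proof -
  obtain i where i: "i < m" "p \<in> A i \<and> q \<in> B i \<or> p \<in> B i \<and> q \<in> A i"
    using wspd \<open>p \<in> S\<close> \<open>q \<in> S\<close> \<open>p \<noteq> q\<close> unfolding is_wspd_def by metis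
  then have sub: "A i \<subseteq> S" "B i \<subseteq> S" and sep: "well_separated c (A i) (B i)"
    using wspd unfolding is_wspd_def by blast+
  have reps_i: "rep_choice f (A i) (A' i)" "rep_choice f (B i) (B' i)"
    using reps i(1) by blast+
  have edges: "\<forall>x \<in> A' i. \<forall>y \<in> B' i. {x, y} \<in> wspd_graph_edges m A' B'"
    "\<forall>y \<in> B' i. \<forall>x \<in> A' i. {y, x} \<in> wspd_graph_edges m A' B'"
    using i(1) unfolding wspd_graph_edges_def by (blast, auto simp: insert_commute)
  from i(2) show ?thesis
  proof
    assume "p \<in> A i \<and> q \<in> B i"
    then show ?thesis using that sub sep reps_i edges(1) by blast
  next
    assume "p \<in> B i \<and> q \<in> A i"
    then show ?thesis
      using that[OF _ _ sub(2,1) well_separated_commute[THEN iffD1, OF sep] reps_i(2,1) edges(2)]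
      by blast
  qed
qed

lemma wspd_graph_dist_le:
  fixes S :: "'a::metric_space set"
  assumes "finite S" "\<epsilon> > 0" and wspd: "is_wspd S (2 + 4/\<epsilon>) m A B"
    and reps: "\<forall>i<m. rep_choice f (A i) (A' i) \<and> rep_choice f (B i) (B' i)"
    and deg: "max_degree_le S F f" "finite F"
    and "p \<in> S" "q \<in> S" "p = q \<or> {p, q} \<notin> F"
  shows "graph_dist (wspd_graph_edges m A' B' - F) p q \<le> ereal ((1 + \<epsilon>) * dist p q)"
proof -
  let ?G = "wspd_graph_edges m A' B'"
  have "p = q \<or> {p, q} \<notin> F \<longrightarrow> graph_dist (?G - F) p q \<le> ereal ((1 + \<epsilon>) * dist p q)"
    using \<open>finite S\<close> \<open>p \<in> S\<close> \<open>q \<in> S\<close>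
  proof (induction rule: finite_dist_induct)
    case (closer p q)
    show ?case
    proof (cases "p = q")
      case True
      then show ?thesis using graph_dist_refl_le[of "?G - F" p] by (simp add: zero_ereal_def)
    next
      case False
      obtain X Y X' Y' where "p \<in> X" "q \<in> Y" "X \<subseteq> S" "Y \<subseteq> S" "well_separated (2 + 4/\<epsilon>) X Y"
        "rep_choice f X X'" "rep_choice f Y Y'" "\<forall>x \<in> X'. \<forall>y \<in> Y'. {x, y} \<in> ?G"
        using wspd_pair_containing[OF wspd reps closer(1,2) False] .
      moreover have "finite X" "finite Y"
        using \<open>X \<subseteq> S\<close> \<open>Y \<subseteq> S\<close> \<open>finite S\<close> finite_subset by blast+
      moreover have "\<And>x y. x \<in> S \<Longrightarrow> y \<in> S \<Longrightarrow> dist x y < dist p q \<Longrightarrow> x = y \<or> {x, y} \<notin> F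
          \<Longrightarrow> graph_dist (?G - F) x y \<le> ereal ((1 + \<epsilon>) * dist x y)"
        using closer.IH by blast
      ultimately show ?thesis
        using wspd_pair_graph_dist_le[OF deg, of X Y p q] False \<open>\<epsilon> > 0\<close> by blast
    qed
  qed
  then show ?thesis using assms(9) by blast
qed

theorem theorem3:
  fixes S :: "'a::metric_space set" and f m :: nat and \<epsilon> :: real
    and A B A' B' :: "nat \<Rightarrow> 'a set"
  assumes "finite S" and "f \<ge> 1" and "\<epsilon> > 0"
    and "is_wspd S (2 + 4 / \<epsilon>) m A B"
    and "\<forall>i<m. rep_choice f (A i) (A' i) \<and> rep_choice f (B i) (B' i)"
  shows "fault_degree_spanner S (wspd_graph_edges m A' B') f (1 + \<epsilon>)
         \<and> card (wspd_graph_edges m A' B') \<le> (2*f+1)^2 * m"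
proof -
  have "\<forall>i<m. finite (A' i) \<and> card (A' i) \<le> 2*f+1 \<and> finite (B' i) \<and> card (B' i) \<le> 2*f+1"
    using assms(1,4,5) finite_subset rep_choice_subset card_rep_choice_le
    unfolding is_wspd_def by metis
  then have card: "card (wspd_graph_edges m A' B') \<le> (2*f+1)^2 * m"
    and fin: "finite (wspd_graph_edges m A' B')"
    by (simp_all add: card_wspd_graph_edges_le finite_wspd_graph_edges)
  have spanner: "fault_degree_spanner S (wspd_graph_edges m A' B') f (1 + \<epsilon>)"
    unfolding fault_degree_spanner_def
  proof (intro allI impI ballI)
    fix F p q
    assume "F \<subseteq> wspd_graph_edges m A' B' \<and> max_degree_le S F f"
    then have "finite F" "max_degree_le S F f" using fin finite_subset by blast+
    have "{x, y} \<in> complete_edges S - F \<Longrightarrow>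
        graph_dist (wspd_graph_edges m A' B' - F) x y \<le> ereal ((1 + \<epsilon>) * dist x y)" for x y
      by (rule wspd_graph_dist_le[OF assms(1,3,4,5) \<open>max_degree_le S F f\<close> \<open>finite F\<close>])
         (auto simp: complete_edges_def doubleton_eq_iff)
    then show "graph_dist (wspd_graph_edges m A' B' - F) p q
        \<le> ereal (1 + \<epsilon>) * graph_dist (complete_edges S - F) p q"
      using graph_dist_le_mult_if_edges \<open>\<epsilon> > 0\<close> by (metis add_pos_pos zero_less_one)
  qed
  show ?thesis using spanner card by blast
qed

end
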